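(* Let $m,n,k\in\mathbb{N}$, let $\varepsilon\geq 0$, and let $\mathbf{X}$ be a random matrix in $\mathbb{R}^{m\times n}$ with arbitrary distribution (continuous, discrete, discrete-continuous mixture, or singular). Let $\mathcal{S}\subseteq\mathbb{R}^{m\times n}$ be an $\varepsilon$-support set of $\mathbf{X}$ and suppose $k>\underline{\dim}_\mathrm{B}(\mathcal{S})$. Then for Lebesgue almost all $(\mathbf{A}_1,\dots,\mathbf{A}_k)\in(\mathbb{R}^{m\times n})^k$ there exists a measurable map (decoder) $g:\mathbb{R}^k\to\mathbb{R}^{m\times n}$ such that $$\Pr\Big[g\big((\langle \mathbf{A}_1,\mathbf{X}\rangle,\dots,\langle \mathbf{A}_k,\mathbf{X}\rangle)^{T}\big)\neq \mathbf{X}\Big]\leq\varepsilon.$$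
   Context: For $\mathbf{A},\mathbf{B}\in\mathbb{R}^{m\times n}$, $\langle \mathbf{A},\mathbf{B}\rangle=\operatorname{tr}(\mathbf{A}^T\mathbf{B})$ and $\|\mathbf{A}\|_2=\sqrt{\langle\mathbf{A},\mathbf{A}\rangle}$. For $\varepsilon\ge 0$, a nonempty bounded set $\mathcal{S}\subseteq\mathbb{R}^{m\times n}$ is called an $\varepsilon$-support set of the random matrix $\mathbf{X}$ if $\Pr[\mathbf{X}\in\mathcal{S}]\geq 1-\varepsilon$. For a nonempty bounded set $\mathcal{S}\subseteq\mathbb{R}^{m\times n}$, let $N_\mathcal{S}(\rho)$ be the minimal number of open $\|\cdot\|_2$-balls of radius $\rho$ (with centers in $\mathbb{R}^{m\times n}$) needed to cover $\mathcal{S}$; the lower Minkowski dimension is $\underline{\dim}_\mathrm{B}(\mathcal{S})=\liminf_{\rho\to0}\frac{\log N_\mathcal{S}(\rho)}{\log(1/\rho)}$. *)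

theory Defs
  imports "HOL-Probability.Probability"
begin

text \<open>Matrices in R^(m x n) are rendered as real^'n^'m. The library inner product on this
type is the Frobenius inner product tr(A^T B) = sum_i sum_j A_ij B_ij, and norm is the
Frobenius norm.\<close>

definition covering_number :: "'a::metric_space set \<Rightarrow> real \<Rightarrow> nat" where
  "covering_number S \<rho> =
     (LEAST N. \<exists>C. finite C \<and> card C = N \<and> S \<subseteq> (\<Union>c\<in>C. ball c \<rho>))"

definition lower_box_dim :: "'a::metric_space set \<Rightarrow> ereal" where
  "lower_box_dim S =
     Liminf (at_right 0) (\<lambda>\<rho>. ereal (ln (real (covering_number S \<rho>)) / ln (1 / \<rho>)))"

definition eps_support_set :: "'w measure \<Rightarrow> ('w \<Rightarrow> 'a::metric_space) \<Rightarrow> 'a set \<Rightarrow> real \<Rightarrow> bool" where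
  "eps_support_set M X S \<epsilon> \<longleftrightarrow>
     S \<noteq> {} \<and> bounded S \<and> measure M {\<omega> \<in> space M. X \<omega> \<in> S} \<ge> 1 - \<epsilon>"

end

theory Submission
  imports Defs
begin

text \<open>Fix \<open>x\<close> and \<open>\<delta> > 0\<close>, and let \<open>N(\<rho>) \<le> \<rho>\<^sup>-\<^sup>s\<close> with \<open>s < k\<close> for arbitrarily small \<open>\<rho>\<close>.
  Cover \<open>S\<close> by \<open>N(\<rho>)\<close> balls of radius \<open>\<rho>\<close>. A bounded \<open>A\<close> giving \<open>x\<close> the same measurements
  as some point of \<open>closure S\<close> at distance \<open>\<ge> \<delta>\<close> lies in one of \<open>N(\<rho>)\<close> slabs
  \<open>{A. \<forall>i. \<bar>\<langle>A\<^sub>i, c - x\<rangle>\<bar> = O(\<rho>)}\<close> with \<open>\<parallel>c - x\<parallel> \<ge> \<delta>/2\<close>, each of volume \<open>O(\<rho>\<^sup>k)\<close>; so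
  these \<open>A\<close> form a set of measure \<open>O(\<rho>\<^sup>k\<^sup>-\<^sup>s)\<close>, a null set. By Fubini, for almost every \<open>A\<close>
  almost surely no other point of the compact set \<open>closure S\<close> has the measurements of \<open>X\<close>,
  and a Borel left inverse of the measurement map on such points is a decoder that can only
  fail when \<open>X \<notin> closure S\<close>, an event of probability at most \<open>\<epsilon>\<close>.\<close>

lemma covering_number_cover:
  fixes S :: "'a::heine_borel set"
  assumes "bounded S" "0 < \<rho>"
  obtains C where "finite C" "card C = covering_number S \<rho>" "S \<subseteq> (\<Union>c\<in>C. ball c \<rho>)"
proof -
  have "compact (closure S)" using assms by (simp add: compact_closure)
  then obtain C where "finite C" "closure S \<subseteq> (\<Union>c\<in>C. ball c \<rho>)"
    unfolding compact_eq_totally_bounded using assms by blast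
  hence "\<exists>N C. finite C \<and> card C = N \<and> S \<subseteq> (\<Union>c\<in>C. ball c \<rho>)"
    using closure_subset by blast
  from LeastI_ex[OF this] show thesis
    using that unfolding covering_number_def by blast
qed

lemma frequently_covering_number_le_powr:
  fixes S :: "'a::metric_space set"
  assumes "lower_box_dim S < ereal r"
  obtains s where "s < r" "\<exists>\<^sub>F \<rho> in at_right 0. real (covering_number S \<rho>) \<le> (1/\<rho>) powr s"
proof -
  obtain s where s: "lower_box_dim S < ereal s" "s < r"
    using ereal_dense2[OF assms] by auto
  define f where "f \<rho> = ln (real (covering_number S \<rho>)) / ln (1 / \<rho>)" for \<rho> :: real
  have "\<not> (\<forall>\<^sub>F \<rho> in at_right 0. ereal s \<le> ereal (f \<rho>))"
  proof
    assume "\<forall>\<^sub>F \<rho> in at_right 0. ereal s \<le> ereal (f \<rho>)"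
    hence "ereal s \<le> lower_box_dim S"
      unfolding lower_box_dim_def f_def by (rule Liminf_bounded)
    with s(1) show False by simp
  qed
  hence "\<exists>\<^sub>F \<rho> in at_right 0. f \<rho> < s"
    by (simp add: not_eventually not_le)
  moreover have "\<forall>\<^sub>F \<rho> in at_right 0. 0 < \<rho> \<and> \<rho> < (1::real)"
    by (simp add: eventually_at_right_field) (metis zero_less_one)
  ultimately have "\<exists>\<^sub>F \<rho> in at_right 0. real (covering_number S \<rho>) \<le> (1/\<rho>) powr s"
  proof (rule frequently_rev_mp[OF frequently_eventually_frequently], intro always_eventually allI impI)
    fix \<rho> :: real assume \<rho>: "f \<rho> < s \<and> 0 < \<rho> \<and> \<rho> < 1"
    have "0 < ln (1/\<rho>)" using \<rho> by (simp add: ln_div)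
    hence "ln (real (covering_number S \<rho>)) \<le> s * ln (1/\<rho>)"
      using \<rho> \<open>0 < ln (1/\<rho>)\<close> by (simp add: f_def divide_less_eq)
    also have "\<dots> = ln ((1/\<rho>) powr s)" using \<rho> by (simp add: ln_powr)
    finally show "real (covering_number S \<rho>) \<le> (1/\<rho>) powr s"
      using \<rho> by (cases "covering_number S \<rho> = 0") (auto simp del: ln_powr)
  qed
  with s(2) that show thesis by blast
qed

lemma norm_vec_le_sum:
  fixes x :: "'a::real_normed_vector^'k"
  shows "norm x \<le> (\<Sum>i\<in>UNIV. norm (x$i))"
  unfolding norm_vec_def by (rule L2_set_le_sum) simp

lemma card_mult_measure_le_disjoint_translates:
  fixes F B :: "'a::euclidean_space set" and v :: "'i \<Rightarrow> 'a"
  assumes F: "F \<in> lmeasurable" and B: "B \<in> lmeasurable" and G: "finite G"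
    and sub: "\<And>j. j \<in> G \<Longrightarrow> (+) (v j) ` F \<subseteq> B"
    and disj: "\<And>j j'. j \<in> G \<Longrightarrow> j' \<in> G \<Longrightarrow> j \<noteq> j' \<Longrightarrow> (+) (v j) ` F \<inter> (+) (v j') ` F = {}"
  shows "real (card G) * measure lebesgue F \<le> measure lebesgue B"
proof -
  have T: "(+) (v j) ` F \<in> lmeasurable" for j by (rule measurable_translation[OF F])
  have "real (card G) * measure lebesgue F = (\<Sum>j\<in>G. measure lebesgue ((+) (v j) ` F))"
    by (simp add: measure_translation)
  also have "\<dots> = measure lebesgue (\<Union>j\<in>G. (+) (v j) ` F)"
    by (rule measure_finite_Union[symmetric])
      (use G disj T fmeasurableD2[OF T] in \<open>auto simp: disjoint_family_on_def simp del: emeasure_completion\<close>)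
  also have "\<dots> \<le> measure lebesgue B"
    by (rule measure_mono_fmeasurable) (use sub G T B in auto)
  finally show ?thesis .
qed

definition slab :: "real \<Rightarrow> real \<Rightarrow> 'a::real_inner \<Rightarrow> ('a^'k) set" where
  "slab R t c = {A. norm A \<le> R \<and> (\<forall>i. \<bar>A$i \<bullet> c\<bar> \<le> t)}"

lemma lmeasurable_slab: "slab R t (c::'a::euclidean_space) \<in> lmeasurable"
proof -
  have eq: "slab R t c = cball 0 R \<inter> (\<Inter>i. {A. \<bar>A$i \<bullet> c\<bar> \<le> t})"
    unfolding slab_def by auto
  have "closed (slab R t c)" unfolding eq
    by (intro closed_Int closed_INT closed_cball ballI closed_Collect_le continuous_intros)
  moreover have "bounded (slab R t c)" unfolding eq by (meson bounded_Int bounded_cball)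
  ultimately show ?thesis by (intro lmeasurable_compact) (simp add: compact_eq_bounded_closed)
qed

text \<open>The translates of the slab by the grid vectors \<open>(j\<^sub>1 h u, \<dots>, j\<^sub>k h u)\<close>, \<open>j\<^sub>i < J\<close>, with
  \<open>u\<close> the unit vector along \<open>c\<close>, are disjoint because they shift \<open>\<langle>A\<^sub>i, c\<rangle>\<close> by multiples
  of \<open>h \<parallel>c\<parallel> > 2t\<close>.\<close>
lemma grid_packing_slab:
  fixes c :: "'a::euclidean_space"
  assumes h: "0 < h" "real J * h \<le> 1" and t: "0 \<le> t" "2 * t < h * norm c"
  shows "real J ^ CARD('k) * measure lebesgue (slab R t c :: ('a^'k) set)
     \<le> measure lebesgue (cball (0::'a^'k) (R + real CARD('k)))"
proof -
  define u where "u = c /\<^sub>R norm c"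
  have "c \<noteq> 0" using t by auto
  hence u: "norm u = 1" "u \<bullet> c = norm c"
    by (auto simp: u_def power2_norm_eq_inner[symmetric] power2_eq_square)
  define v where "v j = (\<chi> i. (real (j i) * h) *\<^sub>R u)" for j :: "'k \<Rightarrow> nat"
  define G where "G = PiE (UNIV::'k set) (\<lambda>_. {..<J})"
  have "card G = J ^ CARD('k)" unfolding G_def by (simp add: card_PiE)
  moreover have "real (card G) * measure lebesgue (slab R t c :: ('a^'k) set)
      \<le> measure lebesgue (cball (0::'a^'k) (R + real CARD('k)))"
  proof (rule card_mult_measure_le_disjoint_translates[OF lmeasurable_slab])
    show "finite G" unfolding G_def by (simp add: finite_PiE)
  next
    show "cball 0 (R + real CARD('k)) \<in> lmeasurable" by simp
  next
    fix j assume "j \<in> G"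
    have "norm (v j) \<le> (\<Sum>i\<in>UNIV. norm (v j $ i))" by (rule norm_vec_le_sum)
    also have "\<dots> \<le> (\<Sum>i\<in>(UNIV::'k set). 1)"
    proof (rule sum_mono)
      fix i
      have "real (j i) * h \<le> real J * h"
        using \<open>j \<in> G\<close> h unfolding G_def by (auto simp: PiE_iff less_imp_le)
      moreover have "norm (v j $ i) = real (j i) * h" using h by (simp add: v_def u)
      ultimately show "norm (v j $ i) \<le> 1" using h(2) by linarith
    qed
    finally have "norm (v j) \<le> real CARD('k)" by simp
    thus "(+) (v j) ` slab R t c \<subseteq> cball 0 (R + real CARD('k))"
      unfolding slab_def by (force intro: order_trans[OF norm_triangle_ineq])
  next
    fix j j' assume "j \<in> G" "j' \<in> G" "j \<noteq> j'"
    show "(+) (v j) ` slab R t c \<inter> (+) (v j') ` slab R t c = {}"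
    proof (rule ccontr)
      assume "\<not> ?thesis"
      then obtain A A' where A: "A \<in> slab R t c" "A' \<in> slab R t c" and eq: "v j + A = v j' + A'"
        by auto
      from \<open>j \<noteq> j'\<close> obtain i where ji: "j i \<noteq> j' i" by auto
      have "(v j + A)$i \<bullet> c = (v j' + A')$i \<bullet> c" using eq by simp
      hence "(real (j i) - real (j' i)) * (h * norm c) = A'$i \<bullet> c - A$i \<bullet> c"
        by (simp add: v_def inner_add_left u algebra_simps)
      hence "\<bar>real (j i) - real (j' i)\<bar> * (h * norm c) = \<bar>A'$i \<bullet> c - A$i \<bullet> c\<bar>"
        using h by (metis abs_mult abs_of_nonneg norm_ge_zero zero_le_mult_iff less_imp_le)
      moreover have "1 * (h * norm c) \<le> \<bar>real (j i) - real (j' i)\<bar> * (h * norm c)"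
        using ji h by (intro mult_right_mono) auto
      moreover have "\<bar>A'$i \<bullet> c\<bar> \<le> t" "\<bar>A$i \<bullet> c\<bar> \<le> t" using A unfolding slab_def by auto
      ultimately show False using t(2) by linarith
    qed
  qed
  ultimately show ?thesis by simp
qed

lemma measure_slab_le:
  fixes c :: "'a::euclidean_space"
  assumes \<eta>: "0 < \<eta>" "\<eta> \<le> norm c" and t: "0 < t" "t \<le> \<eta>/6"
  shows "measure lebesgue (slab R t c :: ('a^'k) set)
     \<le> measure lebesgue (cball (0::'a^'k) (R + real CARD('k))) * (6*t/\<eta>) ^ CARD('k)"
proof -
  define h where "h = 3*t/\<eta>"
  have h: "0 < h" "h \<le> 1/2" "2 * t < h * norm c"
    using \<eta> t by (auto simp: h_def field_simps intro: mult_strict_left_mono[THEN order.strict_trans2])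
  define J where "J = nat \<lfloor>1/h\<rfloor>"
  have "1/h \<ge> 2" using h by (simp add: field_simps)
  hence "1/h - 1 \<le> real J" "real J \<le> 1/h" unfolding J_def by linarith+
  hence J: "real J * h \<le> 1" "\<eta> / (6*t) \<le> real J"
    using h \<open>1/h \<ge> 2\<close> \<eta> t by (auto simp: field_simps h_def)
  have J0: "0 < real J" using J(2) \<eta> t by (smt (verit) divide_pos_pos)
  have "measure lebesgue (slab R t c :: ('a^'k) set)
      = (real J ^ CARD('k) * measure lebesgue (slab R t c :: ('a^'k) set)) * (1 / real J) ^ CARD('k)"
    using J0 by (simp add: power_one_over field_simps)
  also have "\<dots> \<le> measure lebesgue (cball (0::'a^'k) (R + real CARD('k))) * (6*t/\<eta>) ^ CARD('k)"
    using grid_packing_slab[OF h(1) J(1) less_imp_le[OF t(1)] h(3)] J(2) J0 \<eta> t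
    by (intro mult_mono power_mono) (auto simp: field_simps)
  finally show ?thesis .
qed

definition confusable :: "real \<Rightarrow> 'a::real_inner set \<Rightarrow> (('a^'k) \<times> 'a) set" where
  "confusable \<delta> K = {(A, x). \<exists>y\<in>K. \<delta> \<le> dist y x \<and> (\<forall>i. A$i \<bullet> y = A$i \<bullet> x)}"

lemma closed_confusable:
  fixes K :: "'a::euclidean_space set"
  assumes "compact K"
  shows "closed (confusable \<delta> K :: (('a^'k) \<times> 'a) set)"
proof -
  define T :: "('a \<times> ('a^'k) \<times> 'a) set" where
    "T = {(y, A, x). \<delta> \<le> dist y x \<and> (\<forall>i. A$i \<bullet> y = A$i \<bullet> x)}"
  have "T = {z. \<delta> \<le> dist (fst z) (snd (snd z))} \<inter>
      (\<Inter>i. {z. fst (snd z) $ i \<bullet> fst z = fst (snd z) $ i \<bullet> snd (snd z)})"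
    unfolding T_def by auto
  hence "closed T"
    by (simp only:) (intro closed_Int closed_INT ballI closed_Collect_le closed_Collect_eq continuous_intros)
  hence "closed {z. \<exists>y. y \<in> K \<and> (y, z) \<in> T}"
    by (rule closed_compact_projection[OF assms])
  moreover have "{z. \<exists>y. y \<in> K \<and> (y, z) \<in> T} = confusable \<delta> K"
    unfolding T_def confusable_def by auto
  ultimately show ?thesis by simp
qed

lemma compact_confusable_section:
  fixes K :: "'a::euclidean_space set"
  assumes "compact K"
  shows "compact {A::'a^'k. norm A \<le> R \<and> (A, x) \<in> confusable \<delta> K}"
proof -
  have "{A::'a^'k. norm A \<le> R \<and> (A, x) \<in> confusable \<delta> K}
      = cball 0 R \<inter> (\<lambda>A. (A, x)) -` confusable \<delta> K" by auto
  moreover have "closed ((\<lambda>A::'a^'k. (A, x)) -` confusable \<delta> K)"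
    by (intro closed_vimage closed_confusable assms continuous_intros)
  ultimately show ?thesis by (simp add: compact_Int_closed)
qed

text \<open>A confusable \<open>y\<close> lies within \<open>2\<rho>\<close> of a centre \<open>c\<close> of the cover, so every row of \<open>A\<close> is
  almost orthogonal to \<open>c - x\<close>, a vector of length at least \<open>\<delta>/2\<close>.\<close>
lemma confusable_section_subset_slabs:
  fixes S :: "'a::real_inner set" and x :: 'a
  assumes cover: "S \<subseteq> (\<Union>c\<in>C. ball c \<rho>)" and R: "0 \<le> R" and \<rho>: "0 < \<rho>" "4 * \<rho> \<le> \<delta>"
  shows "{A::'a^'k. norm A \<le> R \<and> (A, x) \<in> confusable \<delta> (closure S)}
    \<subseteq> (\<Union>c\<in>{c\<in>C. \<delta>/2 \<le> norm (c - x)}. slab R (2 * (R + 1) * \<rho>) (c - x))"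
proof
  fix A :: "'a^'k" assume "A \<in> {A. norm A \<le> R \<and> (A, x) \<in> confusable \<delta> (closure S)}"
  then obtain y where A: "norm A \<le> R" and y: "y \<in> closure S" "\<delta> \<le> dist y x"
    and eq: "\<forall>i. A$i \<bullet> y = A$i \<bullet> x"
    unfolding confusable_def by auto
  obtain s where s: "s \<in> S" "dist s y < \<rho>" using y(1) \<rho>(1) closure_approachable by metis
  then obtain c where c: "c \<in> C" "dist c s < \<rho>" using cover by (auto simp: dist_commute)
  have cy: "norm (c - y) < 2*\<rho>" using c s dist_triangle[of c y s] by (simp add: dist_norm)
  have "\<delta>/2 \<le> norm (c - x)"
    using cy y(2) \<rho>(2) norm_triangle_ineq4[of "c - x" "c - y"]
    by (simp add: dist_norm norm_minus_commute)
  moreover have "\<bar>A$i \<bullet> (c - x)\<bar> \<le> 2 * (R + 1) * \<rho>" for i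
  proof -
    have "\<bar>A$i \<bullet> (c - x)\<bar> = \<bar>A$i \<bullet> (c - y)\<bar>" using eq by (simp add: inner_diff_right)
    also have "\<dots> \<le> norm (A$i) * norm (c - y)" by (rule Cauchy_Schwarz_ineq2)
    also have "\<dots> \<le> R * (2*\<rho>)"
      using Finite_Cartesian_Product.norm_nth_le[of A i] A cy R by (intro mult_mono) auto
    also have "\<dots> \<le> 2 * (R + 1) * \<rho>" using \<rho>(1) by (simp add: algebra_simps)
    finally show ?thesis .
  qed
  ultimately show "A \<in> (\<Union>c\<in>{c\<in>C. \<delta>/2 \<le> norm (c - x)}. slab R (2 * (R + 1) * \<rho>) (c - x))"
    using A c(1) unfolding slab_def by blast
qed

lemma measure_confusable_section_le:
  fixes S :: "'a::euclidean_space set" and x :: 'a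
  assumes S: "bounded S" and \<delta>: "0 < \<delta>" and R: "0 \<le> R"
    and \<rho>: "0 < \<rho>" "\<rho> \<le> \<delta> / (24 * (R + 1))"
  shows "measure lebesgue {A::'a^'k. norm A \<le> R \<and> (A, x) \<in> confusable \<delta> (closure S)}
    \<le> real (covering_number S \<rho>) * measure lebesgue (cball (0::'a^'k) (R + real CARD('k)))
        * (24 * (R + 1) * \<rho> / \<delta>) ^ CARD('k)"
proof -
  define Z where "Z = {A::'a^'k. norm A \<le> R \<and> (A, x) \<in> confusable \<delta> (closure S)}"
  define t where "t = 2 * (R + 1) * \<rho>"
  define bound where
    "bound = measure lebesgue (cball (0::'a^'k) (R + real CARD('k))) * (6*t/(\<delta>/2)) ^ CARD('k)"
  obtain C where C: "finite C" "card C = covering_number S \<rho>" "S \<subseteq> (\<Union>c\<in>C. ball c \<rho>)"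
    using covering_number_cover[OF S \<rho>(1)] by blast
  define C' where "C' = {c\<in>C. \<delta>/2 \<le> norm (c - x)}"
  define U where "U = (\<Union>c\<in>C'. slab R t (c - x) :: ('a^'k) set)"
  have "0 \<le> R * \<rho>" "24 * \<rho> + 24 * (R * \<rho>) \<le> \<delta>"
    using \<rho> R by (simp_all add: field_simps)
  hence t: "0 < t" "t \<le> (\<delta>/2)/6" and "4 * \<rho> \<le> \<delta>"
    using \<rho>(1) unfolding t_def by (simp_all add: algebra_simps)
  have "Z \<subseteq> U"
    unfolding Z_def U_def C'_def t_def
    using confusable_section_subset_slabs[OF C(3) R \<rho>(1) \<open>4 * \<rho> \<le> \<delta>\<close>] .
  moreover have "Z \<in> lmeasurable" unfolding Z_def
    using S by (intro lmeasurable_compact compact_confusable_section) (simp add: compact_closure)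
  moreover have "U \<in> lmeasurable"
    using C(1) unfolding U_def by (intro fmeasurable.finite_UN) (auto simp: C'_def lmeasurable_slab)
  ultimately have "measure lebesgue Z \<le> measure lebesgue U"
    by (meson fmeasurableD measure_mono_fmeasurable)
  also have "\<dots> \<le> (\<Sum>c\<in>C'. measure lebesgue (slab R t (c - x) :: ('a^'k) set))"
    using C(1) lmeasurable_slab unfolding U_def C'_def by (intro measure_UNION_le) (auto intro: fmeasurableD)
  also have "\<dots> \<le> (\<Sum>c\<in>C'. bound)"
    unfolding bound_def using \<delta> t by (intro sum_mono measure_slab_le) (auto simp: C'_def)
  also have "\<dots> \<le> real (card C) * bound"
  proof -
    have "card C' \<le> card C" using C(1) unfolding C'_def by (intro card_mono) auto
    moreover have "0 \<le> bound" using t \<delta> unfolding bound_def by simp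
    ultimately show ?thesis by (simp add: mult_right_mono)
  qed
  finally show ?thesis
    using \<delta> by (simp add: Z_def bound_def t_def C(2) field_simps)
qed

lemma null_sets_compact_measure_0:
  fixes Z :: "'a::euclidean_space set"
  assumes "compact Z" "measure lebesgue Z = 0"
  shows "Z \<in> null_sets lborel"
proof -
  have "Z \<in> sets lborel" using assms(1) by (simp add: borel_compact)
  moreover have "emeasure lborel Z = 0"
    using assms emeasure_eq_measure2[OF fmeasurable_compact[OF assms(1)]] \<open>Z \<in> sets lborel\<close>
    by simp
  ultimately show ?thesis by (simp add: null_sets_def)
qed

lemma nonpos_if_frequently_le_powr:
  fixes m B a :: real
  assumes a: "0 < a" and freq: "\<exists>\<^sub>F \<rho> in at_right 0. m \<le> B * \<rho> powr a"
  shows "m \<le> 0"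
proof (rule ccontr)
  assume "\<not> m \<le> 0"
  have "((\<lambda>\<rho>. B * \<rho> powr a) \<longlongrightarrow> 0) (at_right 0)"
    using a by (intro tendsto_mult_right_zero tendsto_zero_powrI tendsto_ident_at tendsto_const)
      (auto simp: eventually_at_right_field intro: exI[of _ 1])
  hence "\<forall>\<^sub>F \<rho> in at_right 0. B * \<rho> powr a < m"
    using \<open>\<not> m \<le> 0\<close> by (intro order_tendstoD(2)) auto
  with freq have "\<exists>\<^sub>F \<rho> in at_right (0::real). False"
    by (rule frequently_rev_mp[OF _ eventually_mono]) auto
  thus False by simp
qed

lemma measure_confusable_section_eq_0:
  fixes S :: "'a::euclidean_space set" and x :: 'a
  assumes S: "bounded S" and dim: "lower_box_dim S < ereal (real CARD('k))"
    and \<delta>: "0 < \<delta>" and R: "0 \<le> R"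
  shows "measure lebesgue {A::'a^'k. norm A \<le> R \<and> (A, x) \<in> confusable \<delta> (closure S)} = 0"
proof -
  obtain s where s: "s < real CARD('k)"
    and freq: "\<exists>\<^sub>F \<rho> in at_right 0. real (covering_number S \<rho>) \<le> (1/\<rho>) powr s"
    using frequently_covering_number_le_powr[OF dim] by blast
  define Z where "Z = {A::'a^'k. norm A \<le> R \<and> (A, x) \<in> confusable \<delta> (closure S)}"
  define B where "B = measure lebesgue (cball (0::'a^'k) (R + real CARD('k)))
    * (24 * (R + 1) / \<delta>) ^ CARD('k)"
  define a where "a = real CARD('k) - s"
  have bound: "measure lebesgue Z \<le> B * \<rho> powr a"
    if \<rho>: "0 < \<rho>" "\<rho> \<le> \<delta> / (24 * (R + 1))"
      and N: "real (covering_number S \<rho>) \<le> (1/\<rho>) powr s" for \<rho>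
  proof -
    have "(24 * (R + 1) * \<rho> / \<delta>) ^ CARD('k) = (24 * (R + 1) / \<delta>) ^ CARD('k) * \<rho> ^ CARD('k)"
      by (simp add: power_mult_distrib[symmetric])
    hence "measure lebesgue Z \<le> real (covering_number S \<rho>) * (B * \<rho> ^ CARD('k))"
      using measure_confusable_section_le[OF S \<delta> R \<rho>, of x, where 'k='k]
      unfolding Z_def B_def by (simp add: mult_ac)
    also have "\<dots> \<le> (1/\<rho>) powr s * (B * \<rho> ^ CARD('k))"
      using N \<rho>(1) \<delta> R by (intro mult_right_mono) (auto simp: B_def)
    also have "\<dots> = B * \<rho> powr a"
      using \<rho>(1) by (simp add: a_def powr_diff powr_divide powr_realpow[symmetric])
    finally show ?thesis .
  qed
  have "\<forall>\<^sub>F \<rho> in at_right 0. 0 < \<rho> \<and> \<rho> \<le> \<delta> / (24 * (R + 1))"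
    using \<delta> R unfolding eventually_at_right_field
    by (intro exI[of _ "\<delta> / (24 * (R + 1))"]) auto
  hence "\<exists>\<^sub>F \<rho> in at_right 0. measure lebesgue Z \<le> B * \<rho> powr a"
    by (rule frequently_rev_mp[OF freq eventually_mono]) (auto intro: bound)
  hence "measure lebesgue Z \<le> 0"
    using s unfolding a_def by (intro nonpos_if_frequently_le_powr) auto
  thus ?thesis unfolding Z_def by (simp add: order.antisym)
qed

lemma null_sets_confusable_section:
  fixes S :: "'a::euclidean_space set" and x :: 'a
  assumes S: "bounded S" and dim: "lower_box_dim S < ereal (real CARD('k))" and \<delta>: "0 < \<delta>"
  shows "{A::'a^'k. (A, x) \<in> confusable \<delta> (closure S)} \<in> null_sets lborel"
proof -
  have "{A::'a^'k. (A, x) \<in> confusable \<delta> (closure S)}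
      = (\<Union>R::nat. {A. norm A \<le> real R \<and> (A, x) \<in> confusable \<delta> (closure S)})"
    using real_arch_simple by blast
  moreover have "{A::'a^'k. norm A \<le> real R \<and> (A, x) \<in> confusable \<delta> (closure S)} \<in> null_sets lborel"
    for R :: nat
    using S by (intro null_sets_compact_measure_0 compact_confusable_section
        measure_confusable_section_eq_0 dim \<delta>) (simp_all add: compact_closure)
  ultimately show ?thesis by auto
qed

text \<open>Selecting the \<open>f\<close>-minimal point of each fibre is Borel: every sublevel set is the image
  of a compact set, possibly together with the open set \<open>- L ` K\<close>.\<close>
lemma borel_measurable_Inf_fibre:
  fixes L :: "'a::euclidean_space \<Rightarrow> 'b::t2_space" and f :: "'a \<Rightarrow> real"
  assumes K: "compact K" and L: "continuous_on K L" and f: "continuous_on K f"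
  shows "(\<lambda>z. if z \<in> L ` K then Inf (f ` {x\<in>K. L x = z}) else 0) \<in> borel_measurable borel"
proof (subst borel_measurable_iff_le, intro allI)
  fix a
  define h where "h z = (if z \<in> L ` K then Inf (f ` {x\<in>K. L x = z}) else 0)" for z
  have h_le: "h z \<le> a \<longleftrightarrow> z \<in> L ` (K \<inter> f -` {..a}) \<or> (z \<notin> L ` K \<and> 0 \<le> a)" for z
  proof (cases "z \<in> L ` K")
    case True
    have "compact (K \<inter> {x\<in>K. L x = z})"
      using K L by (intro compact_Int_closed continuous_closed_preimage_constant compact_imp_closed)
    moreover have "K \<inter> {x\<in>K. L x = z} = {x\<in>K. L x = z}" by blast
    moreover have "{x\<in>K. L x = z} \<noteq> {}" using True by blast
    moreover have "continuous_on {x\<in>K. L x = z} f" by (rule continuous_on_subset[OF f]) auto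
    ultimately have "\<exists>x0\<in>{x\<in>K. L x = z}. \<forall>y\<in>{x\<in>K. L x = z}. f x0 \<le> f y"
      by (intro continuous_attains_inf) simp_all
    then obtain x0 where x0: "x0 \<in> K" "L x0 = z"
      and min: "\<And>y. y \<in> K \<Longrightarrow> L y = z \<Longrightarrow> f x0 \<le> f y" by blast
    have "h z = f x0"
      unfolding h_def using True x0 min by (auto intro!: cInf_eq_minimum)
    thus ?thesis using x0 min by force
  qed (auto simp: h_def)
  have "compact (K \<inter> (K \<inter> f -` {..a}))"
    by (intro compact_Int_closed[OF K] continuous_closed_preimage[OF f compact_imp_closed[OF K]]) simp
  hence "compact (L ` (K \<inter> f -` {..a}))"
    by (intro compact_continuous_image continuous_on_subset[OF L]) (simp_all add: Int_absorb)
  moreover have "open (- L ` K)"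
    using compact_continuous_image[OF L K] by (simp add: compact_imp_closed open_Compl)
  ultimately have "L ` (K \<inter> f -` {..a}) \<union> (- L ` K \<inter> {z. 0 \<le> a}) \<in> sets borel"
    by (cases "0 \<le> a") (auto intro: borel_closed compact_imp_closed borel_open)
  moreover have "{z \<in> space borel. h z \<le> a} = L ` (K \<inter> f -` {..a}) \<union> (- L ` K \<inter> {z. 0 \<le> a})"
    using h_le by auto
  ultimately show "{z \<in> space borel. h z \<le> a} \<in> sets borel" by simp
qed

lemma borel_measurable_left_inverse_on_injective_points:
  fixes L :: "'a::euclidean_space \<Rightarrow> 'b::t2_space"
  assumes K: "compact K" and L: "continuous_on K L"
  obtains g where "g \<in> borel_measurable borel"
    and "\<And>x. x \<in> K \<Longrightarrow> (\<And>y. y \<in> K \<Longrightarrow> L y = L x \<Longrightarrow> y = x) \<Longrightarrow> g (L x) = x"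
proof
  define g where "g z = (\<Sum>b\<in>Basis.
      (if z \<in> L ` K then Inf ((\<lambda>x. x \<bullet> b) ` {x\<in>K. L x = z}) else 0) *\<^sub>R b)" for z
  show "g \<in> borel_measurable borel"
    unfolding g_def
    by (intro borel_measurable_sum borel_measurable_scaleR borel_measurable_Inf_fibre[OF K L]
        borel_measurable_const continuous_intros)
  fix x assume "x \<in> K" and inj: "\<And>y. y \<in> K \<Longrightarrow> L y = L x \<Longrightarrow> y = x"
  hence "{y\<in>K. L y = L x} = {x}" by auto
  thus "g (L x) = x"
    unfolding g_def using \<open>x \<in> K\<close> by (simp add: euclidean_representation)
qed

lemma eq_if_not_confusable:
  fixes A :: "'a::real_inner^'k"
  assumes "\<forall>n. (A, x) \<notin> confusable (1 / Suc n) K" "y \<in> K" "\<forall>i. A$i \<bullet> y = A$i \<bullet> x"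
  shows "y = x"
proof (rule ccontr)
  assume "y \<noteq> x"
  then obtain n :: nat where "inverse (real (Suc n)) < dist y x"
    using reals_Archimedean[of "dist y x"] by auto
  hence "(A, x) \<in> confusable (1 / Suc n) K"
    using assms(2,3) unfolding confusable_def by (auto simp: inverse_eq_divide intro!: bexI[of _ y])
  with assms(1) show False by blast
qed

lemma measure_decoding_error_le:
  fixes X :: "'w \<Rightarrow> 'a::euclidean_space" and A :: "'a^'k"
  assumes "prob_space M" and X[measurable]: "X \<in> borel_measurable M" and K: "compact K"
    and AE: "AE \<omega> in M. \<forall>n. (A, X \<omega>) \<notin> confusable (1 / Suc n) K"
  obtains g :: "real^'k \<Rightarrow> 'a" where "g \<in> borel_measurable borel"
    and "measure M {\<omega> \<in> space M. g (\<chi> i. A$i \<bullet> X \<omega>) \<noteq> X \<omega>}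
      \<le> 1 - measure M {\<omega> \<in> space M. X \<omega> \<in> K}"
proof -
  interpret prob_space M by fact
  have [measurable]: "K \<in> sets borel" using K by (simp add: borel_compact)
  have "continuous_on K (\<lambda>x. \<chi> i. A$i \<bullet> x)"
    by (intro continuous_on_vec_lambda continuous_intros)
  then obtain g :: "real^'k \<Rightarrow> 'a" where g: "g \<in> borel_measurable borel"
    and inv: "\<And>x. x \<in> K \<Longrightarrow> (\<And>y. y \<in> K \<Longrightarrow> (\<chi> i. A$i \<bullet> y) = (\<chi> i. A$i \<bullet> x) \<Longrightarrow> y = x)
      \<Longrightarrow> g (\<chi> i. A$i \<bullet> x) = x"
    using borel_measurable_left_inverse_on_injective_points[OF K] by blast
  obtain N where N: "N \<in> null_sets M"
    and notconf: "\<And>\<omega>. \<omega> \<in> space M - N \<Longrightarrow> \<forall>n. (A, X \<omega>) \<notin> confusable (1 / Suc n) K"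
    using AE by (rule AE_E3) blast
  define Out where "Out = {\<omega> \<in> space M. X \<omega> \<notin> K}"
  have Out[measurable]: "Out \<in> sets M" unfolding Out_def by measurable
  have "{\<omega> \<in> space M. g (\<chi> i. A$i \<bullet> X \<omega>) \<noteq> X \<omega>} \<subseteq> Out \<union> N"
    using inv notconf eq_if_not_confusable unfolding Out_def by (fastforce simp: vec_eq_iff)
  hence "measure M {\<omega> \<in> space M. g (\<chi> i. A$i \<bullet> X \<omega>) \<noteq> X \<omega>} \<le> measure M (Out \<union> N)"
    using N by (intro finite_measure_mono) auto
  also have "\<dots> = measure M Out" using Out N by (rule measure_Un_null_set)
  also have "\<dots> = 1 - measure M {\<omega> \<in> space M. X \<omega> \<in> K}"
    unfolding Out_def by (subst prob_compl[symmetric]) (auto intro!: arg_cong[where f = prob])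
  finally show thesis using g that by blast
qed

lemma eps_support_set_closure:
  fixes X :: "'w \<Rightarrow> 'a::metric_space"
  assumes "prob_space M" "X \<in> borel_measurable M" "eps_support_set M X S \<epsilon>"
  shows "1 - \<epsilon> \<le> measure M {\<omega> \<in> space M. X \<omega> \<in> closure S}"
proof -
  interpret prob_space M by fact
  have "1 - \<epsilon> \<le> measure M {\<omega> \<in> space M. X \<omega> \<in> S}"
    using assms(3) unfolding eps_support_set_def by blast
  also have "\<dots> \<le> measure M {\<omega> \<in> space M. X \<omega> \<in> closure S}"
  proof (cases "{\<omega> \<in> space M. X \<omega> \<in> S} \<in> sets M")
    case True
    have [measurable]: "X \<in> borel_measurable M" "closure S \<in> sets borel" using assms(2) by auto
    have "{\<omega> \<in> space M. X \<omega> \<in> closure S} \<in> sets M" by measurable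
    moreover have "{\<omega> \<in> space M. X \<omega> \<in> S} \<subseteq> {\<omega> \<in> space M. X \<omega> \<in> closure S}"
      using closure_subset by blast
    ultimately show ?thesis by (intro finite_measure_mono)
  next
    case False
    thus ?thesis by (simp add: measure_notin_sets)
  qed
  finally show ?thesis .
qed

lemma AE_AE_swap_null_sections:
  fixes X :: "'w \<Rightarrow> 'a::euclidean_space" and E :: "('b::euclidean_space \<times> 'a) set"
  assumes "sigma_finite_measure M" and X[measurable]: "X \<in> borel_measurable M"
    and E[measurable]: "E \<in> sets borel" and null: "\<And>x. {A. (A, x) \<in> E} \<in> null_sets lborel"
  shows "AE A in lborel. AE \<omega> in M. (A, X \<omega>) \<notin> E"
proof -
  interpret pair_sigma_finite M "lborel :: 'b measure"
    using assms(1) lborel.sigma_finite_measure_axioms by (simp add: pair_sigma_finite_def)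
  have "(\<lambda>z. (snd z, X (fst z))) \<in> measurable (M \<Otimes>\<^sub>M lborel) (borel \<Otimes>\<^sub>M borel)"
    by measurable
  hence [measurable]: "(\<lambda>z. (snd z, X (fst z))) \<in> borel_measurable (M \<Otimes>\<^sub>M lborel)"
    by (simp add: borel_prod)
  have "{z \<in> space (M \<Otimes>\<^sub>M lborel). (snd z, X (fst z)) \<notin> E} \<in> sets (M \<Otimes>\<^sub>M lborel)"
    by measurable
  hence "(AE \<omega> in M. AE A in lborel. (A, X \<omega>) \<notin> E) \<longleftrightarrow> (AE A in lborel. AE \<omega> in M. (A, X \<omega>) \<notin> E)"
    by (rule AE_commute)
  moreover have "AE \<omega> in M. AE A in lborel. (A, X \<omega>) \<notin> E"
    by (intro AE_I2 AE_I'[OF null]) auto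
  ultimately show ?thesis by (rule iffD1)
qed

theorem theorem1:
  fixes M :: "'w measure"
    and X :: "'w \<Rightarrow> real^'n^'m"
    and S :: "(real^'n^'m) set"
    and \<epsilon> :: real
  assumes "prob_space M"
    and "X \<in> borel_measurable M"
    and "\<epsilon> \<ge> 0"
    and "eps_support_set M X S \<epsilon>"
    and "ereal (real CARD('k::finite)) > lower_box_dim S"
  shows "AE A in (lborel :: (real^'n^'m^'k) measure).
           \<exists>g :: real^'k \<Rightarrow> real^'n^'m. g \<in> borel_measurable borel \<and>
             measure M {\<omega> \<in> space M. g (\<chi> i. A $ i \<bullet> X \<omega>) \<noteq> X \<omega>} \<le> \<epsilon>"
proof -
  have S: "bounded S" using assms(4) unfolding eps_support_set_def by blast
  define K where "K = closure S"
  have K: "compact K" using S by (simp add: K_def compact_closure)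
  have "AE A in (lborel :: (real^'n^'m^'k) measure). AE \<omega> in M.
      (A, X \<omega>) \<notin> confusable (1 / Suc n) K" for n
    using assms(1) unfolding K_def
    by (intro AE_AE_swap_null_sections assms(2) null_sets_confusable_section S assms(5)
        borel_closed closed_confusable K[unfolded K_def] prob_space_imp_sigma_finite) auto
  hence "AE A in (lborel :: (real^'n^'m^'k) measure). AE \<omega> in M.
      \<forall>n. (A, X \<omega>) \<notin> confusable (1 / Suc n) K"
    by (simp add: AE_all_countable)
  moreover have "1 - \<epsilon> \<le> measure M {\<omega> \<in> space M. X \<omega> \<in> K}"
    unfolding K_def by (rule eps_support_set_closure[OF assms(1,2,4)])
  ultimately show ?thesis
  proof (elim eventually_mono)
    fix A :: "real^'n^'m^'k"
    assume unique: "AE \<omega> in M. \<forall>n. (A, X \<omega>) \<notin> confusable (1 / Suc n) K"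
      and PK: "1 - \<epsilon> \<le> measure M {\<omega> \<in> space M. X \<omega> \<in> K}"
    from unique obtain g :: "real^'k \<Rightarrow> real^'n^'m" where "g \<in> borel_measurable borel"
      and "measure M {\<omega> \<in> space M. g (\<chi> i. A$i \<bullet> X \<omega>) \<noteq> X \<omega>}
        \<le> 1 - measure M {\<omega> \<in> space M. X \<omega> \<in> K}"
      by (rule measure_decoding_error_le[OF assms(1,2) K])
    with PK show "\<exists>g :: real^'k \<Rightarrow> real^'n^'m. g \<in> borel_measurable borel \<and>
        measure M {\<omega> \<in> space M. g (\<chi> i. A $ i \<bullet> X \<omega>) \<noteq> X \<omega>} \<le> \<epsilon>"
      by auto
  qed
qed

end
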